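(* Let $(s_1,\dots,s_n)$ be an abstract of degree $m$ with $s_1=1$, and let $(s_i,a_i,b_i)_{1\le i\le n}$ be any associated history. Then $$\#\{1\le i<n:\varpi_i=0\}\le\tfrac14n+\tfrac34m.$$
   Context: Fix $m_0\ge1$. An abstract of degree $m\in\{0,\dots,m_0\}$ is a sequence $(s_1,\dots,s_n)\in\{\pm1\}^n$ with $m+\sum_{i=1}^ns_i=0$ and $0<m+\sum_{i=1}^js_i\le m_0$ for all $1\le j<n$. An associated history is a sequence $(s_i,a_i,b_i)_{1\le i\le n}$ with $a_i\in\mathbb N$, $b_i\in\mathbb N\setminus\{0\}$, $a_i\ne b_i$, together with index sets $\omega_0=\{0,\dots,m\}$, $\omega_i=\omega_{i-1}\cup\{b_i\}$ if $s_i=1$ and $\omega_i=\omega_{i-1}\setminus\{b_i\}$ if $s_i=-1$, such that: if $s_i=1$ then $a_i\in\omega_{i-1}$ and $b_i=1+\max(m,a_1,b_1,\dots,a_{i-1},b_{i-1})$; if $s_i=-1$ then $a_i\in\omega_{i-1}$ and $b_i\in\omega_{i-1}\setminus\{a_i,0\}$; and if $(s_i,s_{i+1})=(1,-1)$ then $(a_i,b_i)\ne(a_{i+1},b_{i+1})$. Let $S=(n+m)/2$ (all indices used lie in $\{0,\dots,S\}$). Wave vectors: with formal variables $k_1,\dots,k_S\in\mathbb R^d$, set $q^0_0=-\sum_{j=1}^mk_j$, $q^0_j=k_j$ for $1\le j\le m$, $q^0_j=0$ for $m<j\le S$; for $i\ge1$: if $s_i=1$, $q^i_{a_i}=q^{i-1}_{a_i}-k_{b_i}$,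 $q^i_{b_i}=k_{b_i}$, $q^i_j=q^{i-1}_j$ otherwise; if $s_i=-1$, $q^i_{a_i}=q^{i-1}_{a_i}+q^{i-1}_{b_i}$, $q^i_{b_i}=0$, $q^i_j=q^{i-1}_j$ otherwise. Each $q^i_j$ is an integer linear combination of $k_1,\dots,k_S$. For $1\le i<n$, set $\varpi_i=1$ if either $\omega_i\setminus\{0,\dots,m\}\ne\emptyset$, or there exist $1\le j\le m<\ell\le S$ such that the coefficient of $k_\ell$ in $q^i_j$ is nonzero; otherwise $\varpi_i=0$. *)

theory Defs
  imports Complex_Main
begin

definition is_abstract :: "nat \<Rightarrow> nat \<Rightarrow> nat \<Rightarrow> (nat \<Rightarrow> int) \<Rightarrow> bool" where
  "is_abstract m0 m n s \<longleftrightarrow>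
     m \<le> m0 \<and>
     (\<forall>i\<in>{1..n}. s i = 1 \<or> s i = -1) \<and>
     int m + (\<Sum>i=1..n. s i) = 0 \<and>
     (\<forall>j. 1 \<le> j \<and> j < n \<longrightarrow>
        0 < int m + (\<Sum>i=1..j. s i) \<and> int m + (\<Sum>i=1..j. s i) \<le> int m0)"

fun omega :: "nat \<Rightarrow> (nat \<Rightarrow> int) \<Rightarrow> (nat \<Rightarrow> nat) \<Rightarrow> nat \<Rightarrow> nat set" where
  "omega m s b 0 = {0..m}"
| "omega m s b (Suc i) =
     (if s (Suc i) = 1 then insert (b (Suc i)) (omega m s b i)
      else omega m s b i - {b (Suc i)})"

definition is_history ::
  "nat \<Rightarrow> nat \<Rightarrow> (nat \<Rightarrow> int) \<Rightarrow> (nat \<Rightarrow> nat) \<Rightarrow> (nat \<Rightarrow> nat) \<Rightarrow> bool" where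
  "is_history m n s a b \<longleftrightarrow>
     (\<forall>i\<in>{1..n}.
        a i \<noteq> b i \<and> b i \<noteq> 0 \<and> a i \<in> omega m s b (i - 1) \<and>
        (s i = 1 \<longrightarrow> b i = 1 + Max ({m} \<union> a ` {1..<i} \<union> b ` {1..<i})) \<and>
        (s i = -1 \<longrightarrow> b i \<in> omega m s b (i - 1) - {a i, 0})) \<and>
     (\<forall>i. 1 \<le> i \<and> i < n \<longrightarrow> s i = 1 \<and> s (i + 1) = -1 \<longrightarrow>
        (a i, b i) \<noteq> (a (i + 1), b (i + 1)))"

text \<open>Wave vectors: wave m s a b i j l is the integer coefficient of k_l in q^i_j.\<close>

fun wave :: "nat \<Rightarrow> (nat \<Rightarrow> int) \<Rightarrow> (nat \<Rightarrow> nat) \<Rightarrow> (nat \<Rightarrow> nat) \<Rightarrow>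
             nat \<Rightarrow> nat \<Rightarrow> nat \<Rightarrow> int" where
  "wave m s a b 0 j l =
     (if j = 0 then (if 1 \<le> l \<and> l \<le> m then -1 else 0)
      else (if j \<le> m \<and> l = j then 1 else 0))"
| "wave m s a b (Suc i) j l =
     (if s (Suc i) = 1 then
        (if j = a (Suc i) then wave m s a b i j l - (if l = b (Suc i) then 1 else 0)
         else if j = b (Suc i) then (if l = b (Suc i) then 1 else 0)
         else wave m s a b i j l)
      else
        (if j = a (Suc i) then wave m s a b i j l + wave m s a b i (b (Suc i)) l
         else if j = b (Suc i) then 0
         else wave m s a b i j l))"

definition varpi :: "nat \<Rightarrow> nat \<Rightarrow> (nat \<Rightarrow> int) \<Rightarrow> (nat \<Rightarrow> nat) \<Rightarrow> (nat \<Rightarrow> nat) \<Rightarrow> nat \<Rightarrow> nat" where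
  "varpi m n s a b i =
     (let S = (n + m) div 2 in
      if omega m s b i - {0..m} \<noteq> {} \<or>
         (\<exists>j l. 1 \<le> j \<and> j \<le> m \<and> m < l \<and> l \<le> S \<and> wave m s a b i j l \<noteq> 0)
      then 1 else 0)"

end

(*
  Labels 0..m are the original ones; a +1 step creates a fresh label m + 1, m + 2, ... and a
  -1 step annihilates a live label.  If varpi_k = 0 then no fresh label is alive after step k,
  so s_k = -1; moreover s_(k-1) = -1, for a creation at step k-1 whose fresh label beta is
  annihilated at once leaves the coefficients -1 and +1 of k_beta in two distinct original
  slots, one of which is nonzero.  Hence each such k either removes an original label (at most
  m of them) or removes the last fresh label right after another annihilation.  The potential
  2 (#lost original labels) + (#creations) - 2 (#k with varpi_k = 0) stays nonnegative, and
  since n = 2 (#creations) + m this gives the bound.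
*)

theory Submission
  imports Defs
begin

definition max_label :: "nat \<Rightarrow> (nat \<Rightarrow> nat) \<Rightarrow> (nat \<Rightarrow> nat) \<Rightarrow> nat \<Rightarrow> nat" where
  "max_label m a b i = Max ({m} \<union> a ` {1..i} \<union> b ` {1..i})"

definition n_created :: "(nat \<Rightarrow> int) \<Rightarrow> nat \<Rightarrow> nat" where
  "n_created s i = card {j \<in> {1..i}. s j = 1}"

lemma max_label_0 [simp]: "max_label m a b 0 = m"
  by (simp add: max_label_def)

lemma max_label_Suc:
  "max_label m a b (Suc i) = max (max (a (Suc i)) (b (Suc i))) (max_label m a b i)"
proof -
  have "{m} \<union> a ` {1..Suc i} \<union> b ` {1..Suc i}
      = insert (a (Suc i)) (insert (b (Suc i)) ({m} \<union> a ` {1..i} \<union> b ` {1..i}))"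
    by (auto simp: atLeastAtMostSuc_conv)
  then show ?thesis
    unfolding max_label_def by (simp add: max.assoc max.left_commute)
qed

lemma n_created_0 [simp]: "n_created s 0 = 0"
  by (simp add: n_created_def)

lemma n_created_Suc:
  "n_created s (Suc i) = n_created s i + (if s (Suc i) = 1 then 1 else 0)"
proof -
  have "{j \<in> {1..Suc i}. s j = 1}
      = (if s (Suc i) = 1 then insert (Suc i) {j \<in> {1..i}. s j = 1} else {j \<in> {1..i}. s j = 1})"
    by (auto simp: le_Suc_eq)
  then show ?thesis
    unfolding n_created_def by simp
qed

lemma n_created_mono: "i \<le> j \<Longrightarrow> n_created s i \<le> n_created s j"
  unfolding n_created_def by (rule card_mono) auto

lemma sum_signs_eq:
  assumes "\<And>j. j \<in> {1..i} \<Longrightarrow> s j = 1 \<or> s j = -1"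
  shows "(\<Sum>j=1..i. s j) = 2 * int (n_created s i) - int i"
  using assms by (induction i) (auto simp: n_created_Suc)

lemma abstract_balance:
  assumes "is_abstract m0 m n s"
  shows "n = 2 * n_created s n + m"
  using assms sum_signs_eq[of n s] unfolding is_abstract_def by auto

definition n_new :: "nat \<Rightarrow> nat set \<Rightarrow> nat" where
  "n_new m w = card (w - {0..m})"

definition n_lost :: "nat \<Rightarrow> nat set \<Rightarrow> nat" where
  "n_lost m w = card ({0..m} - w)"

lemma n_lost_le: "0 \<in> w \<Longrightarrow> n_lost m w \<le> m"
proof -
  assume "0 \<in> w"
  then have "{0..m} - w \<subseteq> {1..m}" by (auto simp: Suc_le_eq intro!: gr0I)
  then show ?thesis
    unfolding n_lost_def using card_mono[of "{1..m}"] by fastforce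
qed

lemma n_new_eq_0: "w \<subseteq> {0..m} \<Longrightarrow> n_new m w = 0"
  unfolding n_new_def by (metis Diff_eq_empty_iff card.empty)

lemma varpi_eq_0_D:
  assumes "varpi m n s a b k = 0"
  shows "omega m s b k \<subseteq> {0..m}"
    and "\<And>j l. 1 \<le> j \<Longrightarrow> j \<le> m \<Longrightarrow> m < l \<Longrightarrow> l \<le> (n + m) div 2 \<Longrightarrow> wave m s a b k j l = 0"
  using assms unfolding varpi_def Let_def by (auto split: if_splits)

definition n_varpi_zero :: "nat \<Rightarrow> nat \<Rightarrow> (nat \<Rightarrow> int) \<Rightarrow> (nat \<Rightarrow> nat) \<Rightarrow> (nat \<Rightarrow> nat) \<Rightarrow> nat \<Rightarrow> nat" where
  "n_varpi_zero m n s a b i = card {j. 1 \<le> j \<and> j \<le> i \<and> j < n \<and> varpi m n s a b j = 0}"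

lemma n_varpi_zero_0 [simp]: "n_varpi_zero m n s a b 0 = 0"
  by (simp add: n_varpi_zero_def)

lemma n_varpi_zero_Suc:
  "n_varpi_zero m n s a b (Suc i) =
     n_varpi_zero m n s a b i + (if Suc i < n \<and> varpi m n s a b (Suc i) = 0 then 1 else 0)"
proof -
  let ?Z = "\<lambda>i. {j. 1 \<le> j \<and> j \<le> i \<and> j < n \<and> varpi m n s a b j = 0}"
  have "?Z (Suc i) = (if Suc i < n \<and> varpi m n s a b (Suc i) = 0 then insert (Suc i) (?Z i) else ?Z i)"
    by (auto simp: le_Suc_eq)
  moreover have "finite (?Z i)" and "Suc i \<notin> ?Z i" by auto
  ultimately show ?thesis
    unfolding n_varpi_zero_def by simp
qed

definition potential :: "nat \<Rightarrow> nat \<Rightarrow> (nat \<Rightarrow> int) \<Rightarrow> (nat \<Rightarrow> nat) \<Rightarrow> (nat \<Rightarrow> nat) \<Rightarrow> nat \<Rightarrow> int" where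
  "potential m n s a b i =
     2 * int (n_lost m (omega m s b i)) + int (n_created s i) - 2 * int (n_varpi_zero m n s a b i)"

context
  fixes m n :: nat and s :: "nat \<Rightarrow> int" and a b :: "nat \<Rightarrow> nat"
  assumes signs: "\<And>i. i \<in> {1..n} \<Longrightarrow> s i = 1 \<or> s i = -1"
    and hist: "is_history m n s a b"
begin

lemma history_step:
  assumes "Suc i \<le> n"
  shows "a (Suc i) \<noteq> b (Suc i)" and "b (Suc i) \<noteq> 0" and "a (Suc i) \<in> omega m s b i"
    and "s (Suc i) = 1 \<Longrightarrow> b (Suc i) = max_label m a b i + 1"
    and "s (Suc i) = -1 \<Longrightarrow> b (Suc i) \<in> omega m s b i - {a (Suc i), 0}"
proof -
  have "Suc i \<in> {1..n}" using assms by simp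
  then have "a (Suc i) \<noteq> b (Suc i) \<and> b (Suc i) \<noteq> 0 \<and> a (Suc i) \<in> omega m s b (Suc i - 1) \<and>
      (s (Suc i) = 1 \<longrightarrow> b (Suc i) = 1 + Max ({m} \<union> a ` {1..<Suc i} \<union> b ` {1..<Suc i})) \<and>
      (s (Suc i) = -1 \<longrightarrow> b (Suc i) \<in> omega m s b (Suc i - 1) - {a (Suc i), 0})"
    using hist unfolding is_history_def by blast
  then show "a (Suc i) \<noteq> b (Suc i)" and "b (Suc i) \<noteq> 0" and "a (Suc i) \<in> omega m s b i"
    and "s (Suc i) = 1 \<Longrightarrow> b (Suc i) = max_label m a b i + 1"
    and "s (Suc i) = -1 \<Longrightarrow> b (Suc i) \<in> omega m s b i - {a (Suc i), 0}"
    unfolding max_label_def by (simp_all add: atLeastLessThanSuc_atLeastAtMost)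
qed

lemma sign_step: "Suc i \<le> n \<Longrightarrow> s (Suc i) \<noteq> 1 \<Longrightarrow> s (Suc i) = -1"
  using signs[of "Suc i"] by auto

lemma zero_in_omega: "i \<le> n \<Longrightarrow> 0 \<in> omega m s b i"
  by (induction i) (auto dest: history_step(2))

lemma omega_subset_and_max_label:
  "i \<le> n \<Longrightarrow> omega m s b i \<subseteq> {0..max_label m a b i} \<and> max_label m a b i = m + n_created s i"
proof (induction i)
  case 0
  then show ?case by simp
next
  case (Suc i)
  then have IH: "omega m s b i \<subseteq> {0..max_label m a b i}" "max_label m a b i = m + n_created s i"
    by auto
  have a_le: "a (Suc i) \<le> max_label m a b i"
    using history_step(3)[OF Suc.prems] IH(1) by auto
  show ?case
  proof (cases "s (Suc i) = 1")
    case True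
    then show ?thesis
      using IH a_le history_step(4)[OF Suc.prems] by (auto simp: max_label_Suc n_created_Suc)
  next
    case False
    then have "b (Suc i) \<le> max_label m a b i"
      using IH(1) history_step(5)[OF Suc.prems] sign_step[OF Suc.prems] by auto
    then show ?thesis
      using False IH a_le by (auto simp: max_label_Suc n_created_Suc)
  qed
qed

lemma omega_subset: "i \<le> n \<Longrightarrow> omega m s b i \<subseteq> {0..m + n_created s i}"
  using omega_subset_and_max_label[of i] by metis

lemma finite_omega: "i \<le> n \<Longrightarrow> finite (omega m s b i)"
  using omega_subset finite_subset by blast

lemma created_label: "Suc i \<le> n \<Longrightarrow> s (Suc i) = 1 \<Longrightarrow> b (Suc i) = m + n_created s i + 1"
  using history_step(4) omega_subset_and_max_label[of i] by auto

lemma wave_eq_0_if_uncreated: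
  "i \<le> n \<Longrightarrow> m + n_created s i < l \<Longrightarrow> wave m s a b i j l = 0"
proof (induction i arbitrary: j)
  case 0
  then show ?case by simp
next
  case (Suc i)
  show ?case
  proof (cases "s (Suc i) = 1")
    case True
    then show ?thesis
      using Suc created_label[of i] by (simp add: n_created_Suc)
  next
    case False
    then show ?thesis
      using Suc by (simp add: n_created_Suc)
  qed
qed

lemma n_new_n_lost_create:
  assumes "Suc i \<le> n" "s (Suc i) = 1"
  shows "n_new m (omega m s b (Suc i)) = n_new m (omega m s b i) + 1"
    and "n_lost m (omega m s b (Suc i)) = n_lost m (omega m s b i)"
proof -
  have "b (Suc i) \<notin> omega m s b i" "b (Suc i) \<notin> {0..m}"
    using created_label[OF assms] omega_subset[of i] assms by auto
  moreover have "finite (omega m s b i)" using finite_omega assms by simp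
  moreover have "omega m s b (Suc i) = insert (b (Suc i)) (omega m s b i)" using assms(2) by simp
  ultimately show "n_new m (omega m s b (Suc i)) = n_new m (omega m s b i) + 1"
    and "n_lost m (omega m s b (Suc i)) = n_lost m (omega m s b i)"
    unfolding n_new_def n_lost_def by (simp_all add: insert_Diff_if)
qed

lemma n_new_n_lost_annihilate_old:
  assumes "Suc i \<le> n" "s (Suc i) = -1" "b (Suc i) \<le> m"
  shows "n_new m (omega m s b (Suc i)) = n_new m (omega m s b i)"
    and "n_lost m (omega m s b (Suc i)) = n_lost m (omega m s b i) + 1"
proof -
  have b: "b (Suc i) \<in> omega m s b i" using history_step(5)[OF assms(1,2)] by simp
  have o: "omega m s b (Suc i) = omega m s b i - {b (Suc i)}" using assms(2) by simp
  have "omega m s b (Suc i) - {0..m} = omega m s b i - {0..m}"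
    unfolding o using assms(3) by auto
  then show "n_new m (omega m s b (Suc i)) = n_new m (omega m s b i)"
    unfolding n_new_def by simp
  have "{0..m} - omega m s b (Suc i) = insert (b (Suc i)) ({0..m} - omega m s b i)"
    unfolding o using assms(3) by auto
  then show "n_lost m (omega m s b (Suc i)) = n_lost m (omega m s b i) + 1"
    unfolding n_lost_def using b by simp
qed

lemma n_new_n_lost_annihilate_new:
  assumes "Suc i \<le> n" "s (Suc i) = -1" "m < b (Suc i)"
  shows "n_new m (omega m s b i) = n_new m (omega m s b (Suc i)) + 1"
    and "n_lost m (omega m s b (Suc i)) = n_lost m (omega m s b i)"
proof -
  have b: "b (Suc i) \<in> omega m s b i - {0..m}" using history_step(5)[OF assms(1,2)] assms(3) by simp
  have fin: "finite (omega m s b i - {0..m})" using finite_omega assms(1) by simp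
  have o: "omega m s b (Suc i) = omega m s b i - {b (Suc i)}" using assms(2) by simp
  have "omega m s b (Suc i) - {0..m} = (omega m s b i - {0..m}) - {b (Suc i)}"
    unfolding o by auto
  then show "n_new m (omega m s b i) = n_new m (omega m s b (Suc i)) + 1"
    unfolding n_new_def using card.remove[OF fin b] by (simp del: omega.simps)
  have "{0..m} - omega m s b (Suc i) = {0..m} - omega m s b i"
    unfolding o using assms(3) by auto
  then show "n_lost m (omega m s b (Suc i)) = n_lost m (omega m s b i)"
    unfolding n_lost_def by simp
qed

lemma varpi_eq_0_sign:
  assumes "1 \<le> k" "k < n" "varpi m n s a b k = 0"
  shows "s k = -1"
proof (rule ccontr)
  assume "s k \<noteq> -1"
  obtain i where k: "k = Suc i" using assms(1) by (cases k) auto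
  then have "s (Suc i) = 1" using signs[of k] assms \<open>s k \<noteq> -1\<close> by auto
  then have "b k \<in> omega m s b k" and "m < b k"
    using created_label[of i] k assms(2) by auto
  then show False using varpi_eq_0_D(1)[OF assms(3)] by auto
qed

lemma history_no_immediate_undo:
  assumes "Suc (Suc i) \<le> n" "s (Suc i) = 1" "s (Suc (Suc i)) = -1"
  shows "(a (Suc i), b (Suc i)) \<noteq> (a (Suc (Suc i)), b (Suc (Suc i)))"
  using hist assms unfolding is_history_def by (metis Suc_eq_plus1 Suc_le_lessD le_add1 plus_1_eq_Suc)

lemma wave_create_then_absorb:
  assumes "Suc (Suc u) \<le> n" "s (Suc u) = 1" "s (Suc (Suc u)) = -1"
    and absorb: "b (Suc (Suc u)) = b (Suc u)"
  shows "wave m s a b (Suc (Suc u)) (a (Suc u)) (b (Suc u)) = -1"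
    and "wave m s a b (Suc (Suc u)) (a (Suc (Suc u))) (b (Suc u)) = 1"
proof -
  define \<alpha> \<beta> \<gamma> where "\<alpha> = a (Suc u)" and "\<beta> = b (Suc u)" and "\<gamma> = a (Suc (Suc u))"
  have "\<alpha> \<noteq> \<beta>" using history_step(1)[of u] assms(1) unfolding \<alpha>_def \<beta>_def by simp
  moreover have "\<gamma> \<noteq> \<beta>" using history_step(1)[OF assms(1)] absorb unfolding \<gamma>_def \<beta>_def by simp
  moreover have "\<gamma> \<noteq> \<alpha>" using history_no_immediate_undo[OF assms(1-3)] absorb
    unfolding \<alpha>_def \<gamma>_def by auto
  moreover have "wave m s a b u j \<beta> = 0" for j
    using wave_eq_0_if_uncreated[of u] created_label[of u] assms(1,2) unfolding \<beta>_def by simp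
  ultimately show "wave m s a b (Suc (Suc u)) \<alpha> \<beta> = -1" and "wave m s a b (Suc (Suc u)) \<gamma> \<beta> = 1"
    using assms(2,3) absorb unfolding \<alpha>_def \<beta>_def \<gamma>_def by simp_all
qed

lemma created_label_absorbed:
  assumes "Suc (Suc u) \<le> n" "s (Suc u) = 1" "omega m s b (Suc (Suc u)) \<subseteq> {0..m}"
  shows "b (Suc (Suc u)) = b (Suc u)"
proof (rule ccontr)
  assume "b (Suc (Suc u)) \<noteq> b (Suc u)"
  then have "b (Suc u) \<in> omega m s b (Suc (Suc u))" using assms(2) by simp
  moreover have "m < b (Suc u)" using created_label[of u] assms(1,2) by simp
  ultimately show False using assms(3) by auto
qed

lemma wave_create_then_absorb_nonzero:
  assumes "Suc (Suc u) \<le> n" "s (Suc u) = 1" "s (Suc (Suc u)) = -1"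
    and absorb: "b (Suc (Suc u)) = b (Suc u)"
  shows "\<exists>j\<in>omega m s b (Suc (Suc u)). j \<noteq> 0 \<and> wave m s a b (Suc (Suc u)) j (b (Suc u)) \<noteq> 0"
proof -
  define \<alpha> \<gamma> where "\<alpha> = a (Suc u)" and "\<gamma> = a (Suc (Suc u))"
  have "\<alpha> \<in> omega m s b (Suc (Suc u))"
    using history_step(1,3)[of u] assms unfolding \<alpha>_def by auto
  moreover have "\<gamma> \<in> omega m s b (Suc (Suc u))"
    using history_step(1,3)[OF assms(1)] assms(3) absorb unfolding \<gamma>_def by auto
  moreover have "wave m s a b (Suc (Suc u)) \<alpha> (b (Suc u)) = -1"
    and "wave m s a b (Suc (Suc u)) \<gamma> (b (Suc u)) = 1"
    using wave_create_then_absorb[OF assms] unfolding \<alpha>_def \<gamma>_def by simp_all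
  moreover have "\<alpha> \<noteq> 0 \<or> \<gamma> \<noteq> 0"
    using calculation(3,4) by (metis one_neq_neg_one)
  ultimately show ?thesis
    by (metis one_neq_zero neg_equal_0_iff_equal)
qed

context
  assumes s1: "s 1 = 1" and balance: "n = 2 * n_created s n + m"
begin

lemma varpi_eq_0_prev_sign:
  assumes "Suc i < n" "varpi m n s a b (Suc i) = 0"
  shows "0 < i" and "s i = -1"
proof -
  have annihilate: "s (Suc i) = -1" using varpi_eq_0_sign assms by simp
  then show "0 < i" using s1 by (cases i) auto
  then obtain u where i: "i = Suc u" using gr0_conv_Suc by blast
  show "s i = -1"
  proof (rule ccontr)
    assume "s i \<noteq> -1"
    then have create: "s (Suc u) = 1" using sign_step[of u] assms(1) i by auto
    have le: "Suc (Suc u) \<le> n" using assms(1) i by simp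
    have old: "omega m s b (Suc (Suc u)) \<subseteq> {0..m}"
      using varpi_eq_0_D(1)[OF assms(2)] i by simp
    have "s (Suc (Suc u)) = -1" using annihilate i by simp
    then obtain j where j: "j \<in> omega m s b (Suc (Suc u))" "j \<noteq> 0"
      and nonzero: "wave m s a b (Suc (Suc u)) j (b (Suc u)) \<noteq> 0"
      using wave_create_then_absorb_nonzero[OF le create] created_label_absorbed[OF le create old]
      by blast
    have "m < b (Suc u)" "b (Suc u) \<le> (n + m) div 2"
      using created_label[OF _ create] n_created_mono[of "Suc u" n s] le balance create
      by (simp_all add: n_created_Suc)
    then show False
      using varpi_eq_0_D(2)[OF assms(2), of j "b (Suc u)"] nonzero j old i
      by (auto simp del: wave.simps)
  qed
qed

text \<open>While fresh labels are alive the potential holds a reserve of 2, which pays for a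
  later step with \<open>varpi = 0\<close> annihilating the last of them; the reserve may drop to 1 only
  right after a creation, and such a step is never followed by one with \<open>varpi = 0\<close>.\<close>

lemma potential_lower_bound:
  "i \<le> n \<Longrightarrow>
    (if n_new m (omega m s b i) = 0 then 0
     else if n_new m (omega m s b i) = 1 \<and> s i = 1 then 1 else 2) \<le> potential m n s a b i"
proof (induction i)
  case 0
  then show ?case by (simp add: potential_def n_new_def n_lost_def)
next
  case (Suc i)
  let ?N = "n_new m (omega m s b i)" and ?N' = "n_new m (omega m s b (Suc i))"
  let ?L = "n_lost m (omega m s b i)" and ?L' = "n_lost m (omega m s b (Suc i))"
  let ?counted = "Suc i < n \<and> varpi m n s a b (Suc i) = 0"
  have IH: "(if ?N = 0 then 0 else if ?N = 1 \<and> s i = 1 then 1 else 2) \<le> potential m n s a b i"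
    using Suc by simp
  have step: "potential m n s a b (Suc i) = potential m n s a b i + 2 * (int ?L' - int ?L)
      + (if s (Suc i) = 1 then 1 else 0) - (if ?counted then 2 else 0)"
    by (simp add: potential_def n_created_Suc n_varpi_zero_Suc)
  have counted: "?N' = 0 \<and> s i = -1" if ?counted
    using that varpi_eq_0_prev_sign(2) n_new_eq_0[OF varpi_eq_0_D(1)] by blast
  show ?case
  proof (cases "s (Suc i) = 1")
    case True
    then have "\<not> ?counted" using varpi_eq_0_sign[of "Suc i"] by auto
    then show ?thesis
      using IH step True n_new_n_lost_create[OF Suc.prems True] by (auto split: if_splits)
  next
    case False
    then have annihilate: "s (Suc i) = -1" using sign_step Suc.prems by blast
    show ?thesis
    proof (cases "b (Suc i) \<le> m")
      case True
      then show ?thesis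
        using IH step counted False n_new_n_lost_annihilate_old[OF Suc.prems annihilate]
        by (auto split: if_splits)
    next
      case False
      then show ?thesis
        using IH step counted annihilate n_new_n_lost_annihilate_new[OF Suc.prems annihilate]
        by (auto split: if_splits)
    qed
  qed
qed

lemma potential_nonneg: "i \<le> n \<Longrightarrow> 0 \<le> potential m n s a b i"
  using potential_lower_bound[of i] by (auto split: if_splits)

end

end

theorem lemma6p9:
  fixes m0 m n :: nat and s :: "nat \<Rightarrow> int" and a b :: "nat \<Rightarrow> nat"
  assumes "m0 \<ge> 1"
    and "is_abstract m0 m n s"
    and "s 1 = 1"
    and "is_history m n s a b"
  shows "real (card {i. 1 \<le> i \<and> i < n \<and> varpi m n s a b i = 0})
           \<le> real n / 4 + 3 * real m / 4"
proof -
  have signs: "\<And>i. i \<in> {1..n} \<Longrightarrow> s i = 1 \<or> s i = -1"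
    using assms(2) unfolding is_abstract_def by blast
  note balance = abstract_balance[OF assms(2)]
  have count: "n_varpi_zero m n s a b n = card {i. 1 \<le> i \<and> i < n \<and> varpi m n s a b i = 0}"
    unfolding n_varpi_zero_def by (rule arg_cong[where f = card]) auto
  have "0 \<le> potential m n s a b n"
    using potential_nonneg[OF signs assms(4) assms(3) balance] by simp
  moreover have "n_lost m (omega m s b n) \<le> m"
    using n_lost_le zero_in_omega[OF signs assms(4)] by blast
  ultimately have "4 * card {i. 1 \<le> i \<and> i < n \<and> varpi m n s a b i = 0} \<le> n + 3 * m"
    using balance unfolding potential_def count by linarith
  then show ?thesis by linarith
qed

end
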